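(* Let $V$ be a Majorana algebra with a generating set $A$ of Majorana axes. Suppose $a_0, a_1 \in A$ satisfy $\tau(a_0) = 1$ and the subalgebra $U = \langle\langle a_0, a_1\rangle\rangle$ generated by $a_0$ and $a_1$ is of type $2A$, with third basis vector $a_\rho$. Then $a_\rho$ satisfies axioms M3–M7.
   Context: Let $V$ be a real vector space with a positive definite symmetric bilinear form $(\,,\,)$ and a bilinear commutative (non-associative) product $\cdot$ such that (M1) $(u, v\cdot w) = (u\cdot v, w)$ for all $u,v,w\in V$, and (M2) $(u\cdot u, v\cdot v)\ge (u\cdot v, u\cdot v)$ for all $u,v \in V$. For $a \in V$ and $\mu \in \mathbb{R}$ write $V_\mu^{(a)} = \{v \in V : a\cdot v = \mu v\}$. A nonzero $a\in V$ is said to satisfy axioms M3–M7 if: (M3) $(a,a)=1$ and $a\cdot a = a$; (M4) $V = V_1^{(a)}\oplus V_0^{(a)}\oplus V_{1/4}^{(a)} \oplus V_{1/32}^{(a)}$; (M5) $V_1^{(a)} = \mathbb{R}a$; (M6) the linear map $\tau(a)$ of $V$ acting as $+1$ on $V_1^{(a)}\oplus V_0^{(a)}\oplus V_{1/4}^{(a)}$ and as $-1$ on $V_{1/32}^{(a)}$ preserves the algebra product; (M7) on $V_+^{(a)} := V_1^{(a)}\oplus V_0^{(a)}\oplus V_{1/4}^{(a)}$, the linear map $\sigma(a)$ acting as $+1$ on $V_1^{(a)}\oplus V_0^{(a)}$ and as $-1$ on $V_{1/4}^{(a)}$ preserves the restriction of the algebra product to $V_+^{(a)}$. Elements satisfying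 M3–M7 are called Majorana axes. A Majorana algebra is such a $V$ (satisfying M1, M2) generated as an algebra by a set $A$ of Majorana axes. The subalgebra $\langle\langle a_0,a_1\rangle\rangle$ generated by two Majorana axes is of type $2A$ if it is $3$-dimensional with basis $a_0, a_1, a_\rho$ (the "third basis vector") where $a_\rho\cdot a_\rho = a_\rho$, $a_0\cdot a_1 = \frac{1}{8}(a_0+a_1-a_\rho)$, $a_0\cdot a_\rho = \frac18(a_0+a_\rho-a_1)$, $a_1\cdot a_\rho = \frac18(a_1+a_\rho-a_0)$, and $(a_0,a_1)=(a_0,a_\rho)=(a_1,a_\rho)=\frac18$. *)

theory Defs
  imports "HOL-Analysis.Analysis"
begin

definition eigsp :: "('v::real_vector \<Rightarrow> 'v \<Rightarrow> 'v) \<Rightarrow> 'v \<Rightarrow> real \<Rightarrow> 'v set" where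
  "eigsp pr a \<mu> = {v. pr a v = \<mu> *\<^sub>R v}"

definition Vplus :: "('v::real_vector \<Rightarrow> 'v \<Rightarrow> 'v) \<Rightarrow> 'v \<Rightarrow> 'v set" where
  "Vplus pr a = {x + y + z | x y z. x \<in> eigsp pr a 1 \<and> y \<in> eigsp pr a 0 \<and> z \<in> eigsp pr a (1/4)}"

text \<open>tau(a): +1 on V_+^(a), -1 on V_{1/32}^(a) (well defined under M4).\<close>
definition tau_map :: "('v::real_vector \<Rightarrow> 'v \<Rightarrow> 'v) \<Rightarrow> 'v \<Rightarrow> 'v \<Rightarrow> 'v" where
  "tau_map pr a v = (THE w. \<exists>p m. p \<in> Vplus pr a \<and> m \<in> eigsp pr a (1/32) \<and> v = p + m \<and> w = p - m)"

definition sigma_map :: "('v::real_vector \<Rightarrow> 'v \<Rightarrow> 'v) \<Rightarrow> 'v \<Rightarrow> 'v \<Rightarrow> 'v" where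
  "sigma_map pr a v = (THE w. \<exists>p q. p \<in> {x + y | x y. x \<in> eigsp pr a 1 \<and> y \<in> eigsp pr a 0}
      \<and> q \<in> eigsp pr a (1/4) \<and> v = p + q \<and> w = p - q)"

definition majorana_axis :: "('v::real_vector \<Rightarrow> 'v \<Rightarrow> real) \<Rightarrow> ('v \<Rightarrow> 'v \<Rightarrow> 'v) \<Rightarrow> 'v \<Rightarrow> bool" where
  "majorana_axis ip pr a \<longleftrightarrow>
     a \<noteq> 0 \<and>
     \<comment> \<open>M3\<close>
     ip a a = 1 \<and> pr a a = a \<and>
     \<comment> \<open>M4: V is the direct sum of the four eigenspaces\<close>
     (\<forall>v. \<exists>!(v1, v0, v4, v32). v1 \<in> eigsp pr a 1 \<and> v0 \<in> eigsp pr a 0 \<and>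
            v4 \<in> eigsp pr a (1/4) \<and> v32 \<in> eigsp pr a (1/32) \<and> v = v1 + v0 + v4 + v32) \<and>
     \<comment> \<open>M5\<close>
     eigsp pr a 1 = range (\<lambda>c. c *\<^sub>R a) \<and>
     \<comment> \<open>M6\<close>
     (\<forall>u v. tau_map pr a (pr u v) = pr (tau_map pr a u) (tau_map pr a v)) \<and>
     \<comment> \<open>M7\<close>
     (\<forall>u\<in>Vplus pr a. \<forall>v\<in>Vplus pr a.
        sigma_map pr a (pr u v) = pr (sigma_map pr a u) (sigma_map pr a v))"

definition alg_gen :: "('v::real_vector \<Rightarrow> 'v \<Rightarrow> 'v) \<Rightarrow> 'v set \<Rightarrow> 'v set" where
  "alg_gen pr S = \<Inter>{W. subspace W \<and> S \<subseteq> W \<and> (\<forall>x\<in>W. \<forall>y\<in>W. pr x y \<in> W)}"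

definition majorana_space :: "('v::real_vector \<Rightarrow> 'v \<Rightarrow> real) \<Rightarrow> ('v \<Rightarrow> 'v \<Rightarrow> 'v) \<Rightarrow> bool" where
  "majorana_space ip pr \<longleftrightarrow>
     bilinear ip \<and> (\<forall>u v. ip u v = ip v u) \<and> (\<forall>v. v \<noteq> 0 \<longrightarrow> ip v v > 0) \<and>
     bilinear pr \<and> (\<forall>u v. pr u v = pr v u) \<and>
     (\<forall>u v w. ip u (pr v w) = ip (pr u v) w) \<and>
     (\<forall>u v. ip (pr u u) (pr v v) \<ge> ip (pr u v) (pr u v))"

definition majorana_algebra :: "('v::real_vector \<Rightarrow> 'v \<Rightarrow> real) \<Rightarrow> ('v \<Rightarrow> 'v \<Rightarrow> 'v) \<Rightarrow> 'v set \<Rightarrow> bool" where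
  "majorana_algebra ip pr A \<longleftrightarrow>
     majorana_space ip pr \<and> (\<forall>a\<in>A. majorana_axis ip pr a) \<and> alg_gen pr A = UNIV"

definition type_2A :: "('v::real_vector \<Rightarrow> 'v \<Rightarrow> real) \<Rightarrow> ('v \<Rightarrow> 'v \<Rightarrow> 'v) \<Rightarrow> 'v \<Rightarrow> 'v \<Rightarrow> 'v \<Rightarrow> bool" where
  "type_2A ip pr a0 a1 ar \<longleftrightarrow>
     card {a0, a1, ar} = 3 \<and> independent {a0, a1, ar} \<and>
     alg_gen pr {a0, a1} = span {a0, a1, ar} \<and>
     pr ar ar = ar \<and>
     pr a0 a1 = (1/8) *\<^sub>R (a0 + a1 - ar) \<and>
     pr a0 ar = (1/8) *\<^sub>R (a0 + ar - a1) \<and>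
     pr a1 ar = (1/8) *\<^sub>R (a1 + ar - a0) \<and>
     ip a0 a1 = 1/8 \<and> ip a0 ar = 1/8 \<and> ip a1 ar = 1/8"

end

theory Submission imports Defs begin

text \<open>Because \<open>\<tau>(a0)\<close> is the identity, the 1/32-eigenspace of \<open>a0\<close> is zero, so \<open>\<sigma>(a0)\<close> is
  defined on all of \<open>V\<close>, and by M7 it is an involutive algebra automorphism. In the 2A algebra
  \<open>a1 = a0/8 + ((a1 + a\<rho>)/2 - a0/8) + (a1 - a\<rho>)/2\<close> is the decomposition of \<open>a1\<close> into
  1-, 0- and 1/4-eigenvectors of \<open>a0\<close>, so \<open>\<sigma>(a0)\<close> swaps \<open>a1\<close> and \<open>a\<rho>\<close>; as eigenspaces for
  distinct eigenvalues are orthogonal by M1, it also preserves \<open>(v, v)\<close>. An automorphism carries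
  the eigenspaces, \<open>\<tau>\<close> and \<open>\<sigma>\<close> of an axis to those of its image, so \<open>a\<rho>\<close> inherits M3--M7
  from \<open>a1\<close>.\<close>

lemma zero_in_eigsp: "bilinear pr \<Longrightarrow> 0 \<in> eigsp pr a \<mu>"
  by (simp add: eigsp_def bilinear_rzero)

lemma eigsp_add:
  "bilinear pr \<Longrightarrow> x \<in> eigsp pr a \<mu> \<Longrightarrow> y \<in> eigsp pr a \<mu> \<Longrightarrow> x + y \<in> eigsp pr a \<mu>"
  by (simp add: eigsp_def bilinear_radd scaleR_add_right)

lemma eigsp_scaleR: "bilinear pr \<Longrightarrow> x \<in> eigsp pr a \<mu> \<Longrightarrow> c *\<^sub>R x \<in> eigsp pr a \<mu>"
  by (simp add: eigsp_def bilinear_rmul)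

lemma majorana_spaceD:
  assumes "majorana_space ip pr"
  shows "bilinear ip" and "\<forall>u v. ip u v = ip v u" and "bilinear pr"
    and "\<forall>u v. pr u v = pr v u" and "\<forall>u v w. ip u (pr v w) = ip (pr u v) w"
  using assms unfolding majorana_space_def by - (elim conjE, assumption)+

lemma eigsp_orthogonal:
  fixes ip :: "'v::real_vector \<Rightarrow> 'v \<Rightarrow> real"
  assumes "bilinear ip" "bilinear pr" "\<forall>u v. pr u v = pr v u"
    and "\<forall>u v w. ip u (pr v w) = ip (pr u v) w"
    and "x \<in> eigsp pr a l" "z \<in> eigsp pr a \<mu>" "l \<noteq> \<mu>"
  shows "ip x z = 0"
proof -
  have "l * ip x z = ip (pr a x) z"
    using assms(5) by (simp add: eigsp_def bilinear_lmul[OF assms(1)])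
  also have "\<dots> = ip x (pr a z)"
    using assms(3,4) by metis
  also have "\<dots> = \<mu> * ip x z"
    using assms(6) by (simp add: eigsp_def bilinear_rmul[OF assms(1)])
  finally show ?thesis
    using assms(7) by (simp add: algebra_simps)
qed

definition eigsp_decomposition :: "('v::real_vector \<Rightarrow> 'v \<Rightarrow> 'v) \<Rightarrow> 'v \<Rightarrow> bool" where
  "eigsp_decomposition pr a \<longleftrightarrow> (\<forall>v. \<exists>!(v1, v0, v4, v32). v1 \<in> eigsp pr a 1 \<and> v0 \<in> eigsp pr a 0 \<and>
     v4 \<in> eigsp pr a (1/4) \<and> v32 \<in> eigsp pr a (1/32) \<and> v = v1 + v0 + v4 + v32)"

lemma majorana_axis_iff:
  "majorana_axis ip pr a \<longleftrightarrow> a \<noteq> 0 \<and> ip a a = 1 \<and> pr a a = a \<and> eigsp_decomposition pr a \<and>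
     eigsp pr a 1 = range (\<lambda>c. c *\<^sub>R a) \<and>
     (\<forall>u v. tau_map pr a (pr u v) = pr (tau_map pr a u) (tau_map pr a v)) \<and>
     (\<forall>u\<in>Vplus pr a. \<forall>v\<in>Vplus pr a.
        sigma_map pr a (pr u v) = pr (sigma_map pr a u) (sigma_map pr a v))"
  by (simp only: majorana_axis_def eigsp_decomposition_def)

lemma eigsp_decompositionE:
  assumes "eigsp_decomposition pr a"
  obtains x y z m where "x \<in> eigsp pr a 1" "y \<in> eigsp pr a 0" "z \<in> eigsp pr a (1/4)"
    "m \<in> eigsp pr a (1/32)" "v = x + y + z + m"
  using ex1_implies_ex[OF assms[unfolded eigsp_decomposition_def, rule_format, of v]] by auto

lemma eigsp_decomposition_unique:
  assumes "eigsp_decomposition pr a"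
    and "x \<in> eigsp pr a 1" "y \<in> eigsp pr a 0" "z \<in> eigsp pr a (1/4)" "m \<in> eigsp pr a (1/32)"
    and "x' \<in> eigsp pr a 1" "y' \<in> eigsp pr a 0" "z' \<in> eigsp pr a (1/4)" "m' \<in> eigsp pr a (1/32)"
    and "x + y + z + m = x' + y' + z' + m'"
  shows "x = x' \<and> y = y' \<and> z = z' \<and> m = m'"
proof -
  let ?P = "\<lambda>(v1, v0, v4, v32). v1 \<in> eigsp pr a 1 \<and> v0 \<in> eigsp pr a 0 \<and>
     v4 \<in> eigsp pr a (1/4) \<and> v32 \<in> eigsp pr a (1/32) \<and> x + y + z + m = v1 + v0 + v4 + v32"
  have unique: "\<exists>!t. ?P t"
    using assms(1)[unfolded eigsp_decomposition_def, rule_format, of "x + y + z + m"] .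
  have "(THE t. ?P t) = (x, y, z, m)"
    using assms(2-5) by (intro the1_equality[OF unique]) simp
  moreover have "(THE t. ?P t) = (x', y', z', m')"
    using assms(6-10) by (intro the1_equality[OF unique]) simp
  ultimately show ?thesis by simp
qed

lemma eigsp_decompositionI:
  assumes "\<And>v. \<exists>x y z m. x \<in> eigsp pr a 1 \<and> y \<in> eigsp pr a 0 \<and> z \<in> eigsp pr a (1/4) \<and>
      m \<in> eigsp pr a (1/32) \<and> v = x + y + z + m"
    and "\<And>x y z m x' y' z' m'. x \<in> eigsp pr a 1 \<Longrightarrow> y \<in> eigsp pr a 0 \<Longrightarrow>
      z \<in> eigsp pr a (1/4) \<Longrightarrow> m \<in> eigsp pr a (1/32) \<Longrightarrow> x' \<in> eigsp pr a 1 \<Longrightarrow>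
      y' \<in> eigsp pr a 0 \<Longrightarrow> z' \<in> eigsp pr a (1/4) \<Longrightarrow> m' \<in> eigsp pr a (1/32) \<Longrightarrow>
      x + y + z + m = x' + y' + z' + m' \<Longrightarrow> x = x' \<and> y = y' \<and> z = z' \<and> m = m'"
  shows "eigsp_decomposition pr a"
  unfolding eigsp_decomposition_def
proof
  fix v
  obtain x y z m where "x \<in> eigsp pr a 1" "y \<in> eigsp pr a 0" "z \<in> eigsp pr a (1/4)"
    "m \<in> eigsp pr a (1/32)" "v = x + y + z + m"
    using assms(1)[of v] by blast
  then show "\<exists>!(v1, v0, v4, v32). v1 \<in> eigsp pr a 1 \<and> v0 \<in> eigsp pr a 0 \<and>
      v4 \<in> eigsp pr a (1/4) \<and> v32 \<in> eigsp pr a (1/32) \<and> v = v1 + v0 + v4 + v32"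
    by (intro ex1I[of _ "(x, y, z, m)"]) (auto dest: assms(2))
qed

lemma tau_map_eq:
  assumes "eigsp_decomposition pr a"
    and "x \<in> eigsp pr a 1" "y \<in> eigsp pr a 0" "z \<in> eigsp pr a (1/4)" "m \<in> eigsp pr a (1/32)"
  shows "tau_map pr a (x + y + z + m) = x + y + z - m"
  unfolding tau_map_def
proof (rule the_equality)
  show "\<exists>p m'. p \<in> Vplus pr a \<and> m' \<in> eigsp pr a (1/32) \<and> x + y + z + m = p + m' \<and> x + y + z - m = p - m'"
    using assms by (auto simp: Vplus_def)
next
  fix w
  assume "\<exists>p m'. p \<in> Vplus pr a \<and> m' \<in> eigsp pr a (1/32) \<and> x + y + z + m = p + m' \<and> w = p - m'"
  then obtain x' y' z' m' where "x' \<in> eigsp pr a 1" "y' \<in> eigsp pr a 0" "z' \<in> eigsp pr a (1/4)"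
    "m' \<in> eigsp pr a (1/32)" "x + y + z + m = x' + y' + z' + m'" "w = x' + y' + z' - m'"
    unfolding Vplus_def by auto
  with eigsp_decomposition_unique[OF assms] show "w = x + y + z - m" by metis
qed

lemma sigma_map_eq:
  assumes "eigsp_decomposition pr a" "bilinear pr"
    and "x \<in> eigsp pr a 1" "y \<in> eigsp pr a 0" "z \<in> eigsp pr a (1/4)"
  shows "sigma_map pr a (x + y + z) = x + y - z"
  unfolding sigma_map_def
proof (rule the_equality)
  show "\<exists>p q. p \<in> {x + y |x y. x \<in> eigsp pr a 1 \<and> y \<in> eigsp pr a 0} \<and> q \<in> eigsp pr a (1/4) \<and>
      x + y + z = p + q \<and> x + y - z = p - q"
    using assms by auto
next
  fix w
  assume "\<exists>p q. p \<in> {x + y |x y. x \<in> eigsp pr a 1 \<and> y \<in> eigsp pr a 0} \<and> q \<in> eigsp pr a (1/4) \<and>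
      x + y + z = p + q \<and> w = p - q"
  then obtain x' y' z' where "x' \<in> eigsp pr a 1" "y' \<in> eigsp pr a 0" "z' \<in> eigsp pr a (1/4)"
    "x + y + z + 0 = x' + y' + z' + 0" "w = x' + y' - z'"
    by auto
  with eigsp_decomposition_unique[OF assms(1,3-5) zero_in_eigsp[OF assms(2)] _ _ _ zero_in_eigsp[OF assms(2)]]
  show "w = x + y - z"
    by metis
qed

lemma tau_map_Vplus:
  assumes "eigsp_decomposition pr a" "bilinear pr" "p \<in> Vplus pr a"
  shows "tau_map pr a p = p"
proof -
  obtain x y z where "x \<in> eigsp pr a 1" "y \<in> eigsp pr a 0" "z \<in> eigsp pr a (1/4)" "p = x + y + z"
    using assms(3) unfolding Vplus_def by auto
  with tau_map_eq[OF assms(1) _ _ _ zero_in_eigsp[OF assms(2)]] show ?thesis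
    by (metis add.right_neutral diff_zero)
qed

lemma Vplus_if_tau_map_fixed:
  assumes "eigsp_decomposition pr a" "tau_map pr a v = v"
  shows "v \<in> Vplus pr a"
proof -
  obtain x y z m where eig: "x \<in> eigsp pr a 1" "y \<in> eigsp pr a 0" "z \<in> eigsp pr a (1/4)"
    "m \<in> eigsp pr a (1/32)" and v: "v = x + y + z + m"
    using eigsp_decompositionE[OF assms(1)] by metis
  have "x + y + z - m = x + y + z + m"
    using tau_map_eq[OF assms(1) eig] assms(2) v by simp
  then have "m = 0"
    by (simp add: algebra_simps flip: scaleR_2)
  then show ?thesis
    using eig v unfolding Vplus_def by auto
qed

lemma Vplus_mult_closed:
  assumes "eigsp_decomposition pr a" "bilinear pr"
    and "\<forall>u v. tau_map pr a (pr u v) = pr (tau_map pr a u) (tau_map pr a v)"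
    and "u \<in> Vplus pr a" "v \<in> Vplus pr a"
  shows "pr u v \<in> Vplus pr a"
  using assms by (intro Vplus_if_tau_map_fixed) (simp_all add: tau_map_Vplus)

lemma sigma_map_add:
  assumes "eigsp_decomposition pr a" "bilinear pr" "u \<in> Vplus pr a" "v \<in> Vplus pr a"
  shows "sigma_map pr a (u + v) = sigma_map pr a u + sigma_map pr a v"
proof -
  obtain x y z where u: "x \<in> eigsp pr a 1" "y \<in> eigsp pr a 0" "z \<in> eigsp pr a (1/4)" "u = x + y + z"
    using assms(3) unfolding Vplus_def by auto
  obtain x' y' z' where v: "x' \<in> eigsp pr a 1" "y' \<in> eigsp pr a 0" "z' \<in> eigsp pr a (1/4)"
    "v = x' + y' + z'"
    using assms(4) unfolding Vplus_def by auto
  have "u + v = (x + x') + (y + y') + (z + z')"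
    using u(4) v(4) by (simp add: algebra_simps)
  then have "sigma_map pr a (u + v) = (x + x') + (y + y') - (z + z')"
    using sigma_map_eq[OF assms(1,2) eigsp_add[OF assms(2) u(1) v(1)] eigsp_add[OF assms(2) u(2) v(2)]
        eigsp_add[OF assms(2) u(3) v(3)]]
    by simp
  also have "\<dots> = (x + y - z) + (x' + y' - z')"
    by (simp add: algebra_simps)
  finally show ?thesis
    using sigma_map_eq[OF assms(1,2) u(1-3)] sigma_map_eq[OF assms(1,2) v(1-3)] u(4) v(4) by simp
qed

lemma sigma_map_scaleR:
  assumes "eigsp_decomposition pr a" "bilinear pr" "u \<in> Vplus pr a"
  shows "sigma_map pr a (c *\<^sub>R u) = c *\<^sub>R sigma_map pr a u"
proof -
  obtain x y z where u: "x \<in> eigsp pr a 1" "y \<in> eigsp pr a 0" "z \<in> eigsp pr a (1/4)" "u = x + y + z"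
    using assms(3) unfolding Vplus_def by auto
  have "c *\<^sub>R u = c *\<^sub>R x + c *\<^sub>R y + c *\<^sub>R z"
    using u(4) by (simp add: scaleR_add_right)
  then have "sigma_map pr a (c *\<^sub>R u) = c *\<^sub>R x + c *\<^sub>R y - c *\<^sub>R z"
    using sigma_map_eq[OF assms(1,2) eigsp_scaleR[OF assms(2) u(1)] eigsp_scaleR[OF assms(2) u(2)]
        eigsp_scaleR[OF assms(2) u(3)]]
    by simp
  also have "\<dots> = c *\<^sub>R (x + y - z)"
    by (simp add: algebra_simps)
  finally show ?thesis
    using sigma_map_eq[OF assms(1,2) u(1-3)] u(4) by simp
qed

lemma sigma_map_sigma_map:
  assumes "eigsp_decomposition pr a" "bilinear pr" "u \<in> Vplus pr a"
  shows "sigma_map pr a (sigma_map pr a u) = u"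
proof -
  obtain x y z where u: "x \<in> eigsp pr a 1" "y \<in> eigsp pr a 0" "z \<in> eigsp pr a (1/4)" "u = x + y + z"
    using assms(3) unfolding Vplus_def by auto
  have "sigma_map pr a u = x + y + (-1) *\<^sub>R z"
    using sigma_map_eq[OF assms(1,2) u(1-3)] u(4) by simp
  moreover have "sigma_map pr a (x + y + (-1) *\<^sub>R z) = x + y - (-1) *\<^sub>R z"
    by (rule sigma_map_eq[OF assms(1,2) u(1,2) eigsp_scaleR[OF assms(2) u(3)]])
  ultimately show ?thesis
    using u(4) by simp
qed

lemma sigma_map_preserves_norm:
  assumes "majorana_space ip pr" "eigsp_decomposition pr a" "u \<in> Vplus pr a"
  shows "ip (sigma_map pr a u) (sigma_map pr a u) = ip u u"
proof -
  note bip = majorana_spaceD(1)[OF assms(1)] and sym = majorana_spaceD(2)[OF assms(1)]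
    and bil = majorana_spaceD(3)[OF assms(1)] and com = majorana_spaceD(4)[OF assms(1)]
    and m1 = majorana_spaceD(5)[OF assms(1)]
  obtain x y z where u: "x \<in> eigsp pr a 1" "y \<in> eigsp pr a 0" "z \<in> eigsp pr a (1/4)" "u = x + y + z"
    using assms(3) unfolding Vplus_def by auto
  define p where "p = x + y"
  have pz: "ip p z = 0"
    using eigsp_orthogonal[OF bip bil com m1 u(1,3)] eigsp_orthogonal[OF bip bil com m1 u(2,3)]
    unfolding p_def by (simp add: bilinear_ladd[OF bip])
  have zp: "ip z p = 0"
    using pz sym[rule_format, of z p] by simp
  have "ip (p - z) (p - z) = ip (p + z) (p + z)"
    using pz zp
    by (simp add: bilinear_lsub[OF bip] bilinear_rsub[OF bip] bilinear_ladd[OF bip] bilinear_radd[OF bip])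
  then show ?thesis
    using sigma_map_eq[OF assms(2) bil u(1-3)] u(4) unfolding p_def by simp
qed

locale algebra_involution =
  fixes pr :: "'v::real_vector \<Rightarrow> 'v \<Rightarrow> 'v" and f :: "'v \<Rightarrow> 'v"
  assumes bilinear: "bilinear pr" and linear: "linear f" and involutive: "\<And>v. f (f v) = v"
    and mult: "\<And>u v. f (pr u v) = pr (f u) (f v)"
begin

lemma add: "f (x + y) = f x + f y"
  using linear by (rule linear_add)

lemma diff: "f (x - y) = f x - f y"
  using linear by (rule linear_diff)

lemma scaleR: "f (c *\<^sub>R x) = c *\<^sub>R f x"
  using linear by (rule linear_scale)

lemma eigsp_iff: "v \<in> eigsp pr (f b) \<mu> \<longleftrightarrow> f v \<in> eigsp pr b \<mu>"
proof -
  have "pr (f b) v = \<mu> *\<^sub>R v \<longleftrightarrow> f (pr (f b) v) = f (\<mu> *\<^sub>R v)"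
    by (metis involutive)
  also have "\<dots> \<longleftrightarrow> pr b (f v) = \<mu> *\<^sub>R f v"
    by (simp add: mult involutive scaleR)
  finally show ?thesis
    unfolding eigsp_def by simp
qed

lemma eigsp_image: "eigsp pr (f b) \<mu> = f ` eigsp pr b \<mu>"
proof (intro set_eqI iffI)
  fix v
  assume "v \<in> eigsp pr (f b) \<mu>"
  then have "f (f v) \<in> f ` eigsp pr b \<mu>"
    unfolding eigsp_iff by (rule imageI)
  then show "v \<in> f ` eigsp pr b \<mu>"
    by (simp add: involutive)
qed (auto simp: eigsp_iff involutive)

lemma Vplus_image: "u \<in> Vplus pr b \<Longrightarrow> f u \<in> Vplus pr (f b)"
  unfolding Vplus_def by (fastforce simp: add eigsp_iff involutive)

lemma eigsp_decomposition_image: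
  assumes "eigsp_decomposition pr a"
  shows "eigsp_decomposition pr (f a)"
proof (rule eigsp_decompositionI)
  fix v
  obtain x y z m where "x \<in> eigsp pr a 1" "y \<in> eigsp pr a 0" "z \<in> eigsp pr a (1/4)"
    "m \<in> eigsp pr a (1/32)" and "f v = x + y + z + m"
    using eigsp_decompositionE[OF assms] by metis
  moreover from this(5) have "v = f x + f y + f z + f m"
    by (metis add involutive)
  ultimately show "\<exists>x y z m. x \<in> eigsp pr (f a) 1 \<and> y \<in> eigsp pr (f a) 0 \<and>
      z \<in> eigsp pr (f a) (1/4) \<and> m \<in> eigsp pr (f a) (1/32) \<and> v = x + y + z + m"
    by (metis eigsp_iff involutive)
next
  fix x y z m x' y' z' m'
  assume "x \<in> eigsp pr (f a) 1" "y \<in> eigsp pr (f a) 0" "z \<in> eigsp pr (f a) (1/4)"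
    "m \<in> eigsp pr (f a) (1/32)" "x' \<in> eigsp pr (f a) 1" "y' \<in> eigsp pr (f a) 0"
    "z' \<in> eigsp pr (f a) (1/4)" "m' \<in> eigsp pr (f a) (1/32)"
    and "x + y + z + m = x' + y' + z' + m'"
  then have "f x = f x' \<and> f y = f y' \<and> f z = f z' \<and> f m = f m'"
    by (intro eigsp_decomposition_unique[OF assms]) (simp_all add: eigsp_iff flip: add)
  then show "x = x' \<and> y = y' \<and> z = z' \<and> m = m'"
    by (metis involutive)
qed

lemma tau_map_image:
  assumes "eigsp_decomposition pr a"
  shows "tau_map pr (f a) w = f (tau_map pr a (f w))"
proof -
  obtain x y z m where h: "x \<in> eigsp pr a 1" "y \<in> eigsp pr a 0" "z \<in> eigsp pr a (1/4)"
    "m \<in> eigsp pr a (1/32)" "f w = x + y + z + m"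
    using eigsp_decompositionE[OF assms] by metis
  have "w = f x + f y + f z + f m"
    using arg_cong[OF h(5), of f] by (simp add: involutive add)
  then have "tau_map pr (f a) w = f x + f y + f z - f m"
    using tau_map_eq[OF eigsp_decomposition_image[OF assms]] h(1-4) by (simp add: eigsp_iff involutive)
  then show ?thesis
    using tau_map_eq[OF assms h(1-4)] h(5) by (simp add: add diff)
qed

lemma sigma_map_image:
  assumes "eigsp_decomposition pr a" "f w \<in> Vplus pr a"
  shows "sigma_map pr (f a) w = f (sigma_map pr a (f w))"
proof -
  obtain x y z where h: "x \<in> eigsp pr a 1" "y \<in> eigsp pr a 0" "z \<in> eigsp pr a (1/4)"
    "f w = x + y + z"
    using assms(2) unfolding Vplus_def by auto
  have "w = f x + f y + f z"
    using arg_cong[OF h(4), of f] by (simp add: involutive add)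
  then have "sigma_map pr (f a) w = f x + f y - f z"
    using sigma_map_eq[OF eigsp_decomposition_image[OF assms(1)] bilinear] h(1-3)
    by (simp add: eigsp_iff involutive)
  then show ?thesis
    using sigma_map_eq[OF assms(1) bilinear h(1-3)] h(4) by (simp add: add diff)
qed

lemma majorana_axis_image:
  assumes "majorana_axis ip pr a" "ip (f a) (f a) = ip a a"
  shows "majorana_axis ip pr (f a)"
proof -
  have nz: "a \<noteq> 0" and norm: "ip a a = 1" and idem: "pr a a = a"
    and dec: "eigsp_decomposition pr a" and m5: "eigsp pr a 1 = range (\<lambda>c. c *\<^sub>R a)"
    and m6: "\<forall>u v. tau_map pr a (pr u v) = pr (tau_map pr a u) (tau_map pr a v)"
    and m7: "\<forall>u\<in>Vplus pr a. \<forall>v\<in>Vplus pr a.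
        sigma_map pr a (pr u v) = pr (sigma_map pr a u) (sigma_map pr a v)"
    using assms(1) unfolding majorana_axis_iff by blast+
  have "f a \<noteq> 0"
    using nz linear_0[OF linear] involutive by metis
  moreover have "eigsp pr (f a) 1 = range (\<lambda>c. c *\<^sub>R f a)"
    unfolding eigsp_image m5 image_image scaleR ..
  moreover have "\<forall>u v. tau_map pr (f a) (pr u v) = pr (tau_map pr (f a) u) (tau_map pr (f a) v)"
    using m6 by (simp add: tau_map_image[OF dec] mult)
  moreover have "sigma_map pr (f a) (pr u v) = pr (sigma_map pr (f a) u) (sigma_map pr (f a) v)"
    if "u \<in> Vplus pr (f a)" "v \<in> Vplus pr (f a)" for u v
  proof -
    have u: "f u \<in> Vplus pr a" and v: "f v \<in> Vplus pr a"
      using Vplus_image[OF that(1)] Vplus_image[OF that(2)] by (simp_all add: involutive)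
    then have "f (pr u v) \<in> Vplus pr a"
      unfolding mult by (rule Vplus_mult_closed[OF dec bilinear m6])
    then show ?thesis
      using m7 u v by (simp add: sigma_map_image[OF dec] mult)
  qed
  ultimately show ?thesis
    unfolding majorana_axis_iff
    using assms(2) norm idem mult eigsp_decomposition_image[OF dec] by metis
qed

end

lemma sigma_map_algebra_involution:
  assumes "majorana_axis ip pr a" "bilinear pr" "\<forall>v. tau_map pr a v = v"
  shows "algebra_involution pr (sigma_map pr a)"
proof -
  have dec: "eigsp_decomposition pr a"
    and m7: "\<forall>u\<in>Vplus pr a. \<forall>v\<in>Vplus pr a.
        sigma_map pr a (pr u v) = pr (sigma_map pr a u) (sigma_map pr a v)"
    using assms(1) unfolding majorana_axis_iff by blast+
  have Vplus: "v \<in> Vplus pr a" for v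
    using Vplus_if_tau_map_fixed[OF dec] assms(3) by blast
  show ?thesis
  proof (rule algebra_involution.intro)
    show "bilinear pr"
      by (rule assms(2))
    show "linear (sigma_map pr a)"
      by (rule linearI) (rule sigma_map_add[OF dec assms(2) Vplus Vplus],
          rule sigma_map_scaleR[OF dec assms(2) Vplus])
    show "sigma_map pr a (sigma_map pr a v) = v" for v
      by (rule sigma_map_sigma_map[OF dec assms(2) Vplus])
    show "sigma_map pr a (pr u v) = pr (sigma_map pr a u) (sigma_map pr a v)" for u v
      using m7 Vplus by blast
  qed
qed

lemma type_2A_eigenvectors:
  assumes "bilinear pr" "pr a0 a0 = a0" "type_2A ip pr a0 a1 ar"
  shows "(1/8) *\<^sub>R a0 \<in> eigsp pr a0 1"
    and "(1/2) *\<^sub>R (a1 + ar) - (1/8) *\<^sub>R a0 \<in> eigsp pr a0 0"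
    and "(1/2) *\<^sub>R (a1 - ar) \<in> eigsp pr a0 (1/4)"
proof -
  have lin: "linear (pr a0)"
    using assms(1) unfolding bilinear_def by blast
  have a01: "pr a0 a1 = (1/8) *\<^sub>R (a0 + a1 - ar)" and a0r: "pr a0 ar = (1/8) *\<^sub>R (a0 + ar - a1)"
    using assms(3) unfolding type_2A_def by blast+
  show "(1/8) *\<^sub>R a0 \<in> eigsp pr a0 1"
    using assms(2) by (simp add: eigsp_def linear_scale[OF lin])
  have "pr a0 (a1 + ar) = (1/8) *\<^sub>R a0 + (1/8) *\<^sub>R a0"
    by (simp add: linear_add[OF lin] a01 a0r algebra_simps)
  also have "\<dots> = (1/4) *\<^sub>R a0"
    by (simp flip: scaleR_add_left)
  finally have "pr a0 (a1 + ar) = (1/4) *\<^sub>R a0" .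
  then show "(1/2) *\<^sub>R (a1 + ar) - (1/8) *\<^sub>R a0 \<in> eigsp pr a0 0"
    using assms(2) by (simp add: eigsp_def linear_diff[OF lin] linear_scale[OF lin])
  have "pr a0 (a1 - ar) = (1/8) *\<^sub>R (a1 - ar) + (1/8) *\<^sub>R (a1 - ar)"
    by (simp add: linear_diff[OF lin] a01 a0r algebra_simps)
  also have "\<dots> = (1/4) *\<^sub>R (a1 - ar)"
    by (simp flip: scaleR_add_left)
  finally have "pr a0 (a1 - ar) = (1/4) *\<^sub>R (a1 - ar)" .
  then show "(1/2) *\<^sub>R (a1 - ar) \<in> eigsp pr a0 (1/4)"
    by (simp add: eigsp_def linear_scale[OF lin])
qed

lemma type_2A_sigma_map:
  assumes "eigsp_decomposition pr a0" "bilinear pr" "pr a0 a0 = a0" "type_2A ip pr a0 a1 ar"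
  shows "sigma_map pr a0 a1 = ar"
proof -
  let ?x = "(1/8) *\<^sub>R a0" and ?y = "(1/2) *\<^sub>R (a1 + ar) - (1/8) *\<^sub>R a0" and ?z = "(1/2) *\<^sub>R (a1 - ar)"
  have "a1 = ?x + ?y + ?z" and "ar = ?x + ?y - ?z"
    by (simp_all add: algebra_simps flip: scaleR_add_left)
  then show ?thesis
    using sigma_map_eq[OF assms(1,2) type_2A_eigenvectors[OF assms(2-4)]] by metis
qed

theorem mainTheorem2:
  fixes ip :: "'v::real_vector \<Rightarrow> 'v \<Rightarrow> real"
    and pr :: "'v \<Rightarrow> 'v \<Rightarrow> 'v"
    and A :: "'v set" and a0 a1 ar :: 'v
  assumes "majorana_algebra ip pr A"
    and "a0 \<in> A" and "a1 \<in> A"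
    and "\<forall>v. tau_map pr a0 v = v"
    and "type_2A ip pr a0 a1 ar"
  shows "majorana_axis ip pr ar"
proof -
  have space: "majorana_space ip pr" and ax0: "majorana_axis ip pr a0" and ax1: "majorana_axis ip pr a1"
    using assms(1-3) unfolding majorana_algebra_def by blast+
  note bil = majorana_spaceD(3)[OF space]
  have dec: "eigsp_decomposition pr a0" and idem: "pr a0 a0 = a0"
    using ax0 unfolding majorana_axis_iff by blast+
  interpret algebra_involution pr "sigma_map pr a0"
    by (rule sigma_map_algebra_involution[OF ax0 bil assms(4)])
  have swap: "sigma_map pr a0 a1 = ar"
    by (rule type_2A_sigma_map[OF dec bil idem assms(5)])
  have "ip ar ar = ip a1 a1"
    using sigma_map_preserves_norm[OF space dec Vplus_if_tau_map_fixed[OF dec]] assms(4) swap by metis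
  then show ?thesis
    using majorana_axis_image[OF ax1] swap by simp
qed

end
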